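(* Let $h:H\to K$ be an expanding isomorphism between torsion-free subgroups $K\subset H$ of a group $G$, and let $\mathcal F\subset\mathcal P_G$ be an $h$-invariant left-invariant ideal. Let $\alpha$ be a nonzero limit ordinal and $\{A_n\}_{n\in\omega}\subset\tau^{<\alpha}(\mathcal F)$ a family of subsets of $H$. Then $A=\bigcup_{n\in\omega}h^n(A_n)$ belongs to $\tau^\alpha(\mathcal F)$.
   Context: $h^1=h$, $h^{n+1}=h\circ h^n$ (and $h^0=\mathrm{id}_H$). $h$ is expanding if $\bigcap_{n\in\mathbb N}h^n(H)=\{e\}$. $\mathcal F$ is $h$-invariant if for every $A\subset H$: $A\in\mathcal F$ iff $h(A)\in\mathcal F$. An ideal is closed under subsets and finite unions; left-invariant: $xF\in\mathcal F$ for $F\in\mathcal F$, $x\in G$. $\tau(\mathcal F)=\{A\subset G: xA\cap yA\in\mathcal F$ for all distinct $x,y\in G\}$, $\tau^0(\mathcal F)=\mathcal F$, $\tau^{<\alpha}(\mathcal F)=\bigcup_{\beta<\alpha}\tau^\beta(\mathcal F)$, $\tau^\alpha(\mathcal F)=\tau(\tau^{<\alpha}(\mathcal F))$ for $\alpha>0$. *)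

theory Defs
  imports "HOL-Algebra.Coset"
begin

definition torsion_free_subgroup :: "('a, 'b) monoid_scheme \<Rightarrow> 'a set \<Rightarrow> bool" where
  "torsion_free_subgroup G H \<longleftrightarrow> subgroup H G \<and>
     (\<forall>x\<in>H. \<forall>n::nat. n > 0 \<longrightarrow> x [^]\<^bsub>G\<^esub> n = \<one>\<^bsub>G\<^esub> \<longrightarrow> x = \<one>\<^bsub>G\<^esub>)"

definition expanding :: "('a, 'b) monoid_scheme \<Rightarrow> 'a set \<Rightarrow> ('a \<Rightarrow> 'a) \<Rightarrow> bool" where
  "expanding G H h \<longleftrightarrow> (\<Inter>n. (h ^^ n) ` H) = {\<one>\<^bsub>G\<^esub>}"

definition h_invariant :: "'a set \<Rightarrow> ('a \<Rightarrow> 'a) \<Rightarrow> 'a set set \<Rightarrow> bool" where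
  "h_invariant H h \<F> \<longleftrightarrow> (\<forall>A. A \<subseteq> H \<longrightarrow> (A \<in> \<F> \<longleftrightarrow> h ` A \<in> \<F>))"

definition is_ideal :: "('a, 'b) monoid_scheme \<Rightarrow> 'a set set \<Rightarrow> bool" where
  "is_ideal G \<F> \<longleftrightarrow> \<F> \<subseteq> Pow (carrier G) \<and>
     (\<forall>A\<in>\<F>. \<forall>B. B \<subseteq> A \<longrightarrow> B \<in> \<F>) \<and>
     (\<forall>A\<in>\<F>. \<forall>B\<in>\<F>. A \<union> B \<in> \<F>)"

definition left_invariant :: "('a, 'b) monoid_scheme \<Rightarrow> 'a set set \<Rightarrow> bool" where
  "left_invariant G \<F> \<longleftrightarrow> (\<forall>F\<in>\<F>. \<forall>x\<in>carrier G. x <#\<^bsub>G\<^esub> F \<in> \<F>)"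

definition tau :: "('a, 'b) monoid_scheme \<Rightarrow> 'a set set \<Rightarrow> 'a set set" where
  "tau G \<F> = {A. A \<subseteq> carrier G \<and>
     (\<forall>x\<in>carrier G. \<forall>y\<in>carrier G. x \<noteq> y \<longrightarrow> (x <#\<^bsub>G\<^esub> A) \<inter> (y <#\<^bsub>G\<^esub> A) \<in> \<F>)}"

text \<open>Transfinite iterates tau^alpha, with ordinals represented by elements of an
  arbitrary well-ordered type 'o (the least element plays the role of 0).\<close>
definition tau_pow :: "('a, 'b) monoid_scheme \<Rightarrow> 'a set set \<Rightarrow> 'o::wellorder \<Rightarrow> 'a set set" where
  "tau_pow G \<F> = wfrec {(x, y). x < y}
     (\<lambda>r \<alpha>. if (\<exists>\<beta>. \<beta> < \<alpha>) then tau G (\<Union>\<beta>\<in>{\<beta>. \<beta> < \<alpha>}. r \<beta>) else \<F>)"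

definition tau_below :: "('a, 'b) monoid_scheme \<Rightarrow> 'a set set \<Rightarrow> 'o::wellorder \<Rightarrow> 'a set set" where
  "tau_below G \<F> \<alpha> = (\<Union>\<beta>\<in>{\<beta>. \<beta> < \<alpha>}. tau_pow G \<F> \<beta>)"

definition nonzero_limit :: "'o::wellorder \<Rightarrow> bool" where
  "nonzero_limit \<alpha> \<longleftrightarrow> (\<exists>\<beta>. \<beta> < \<alpha>) \<and> (\<forall>\<beta><\<alpha>. \<exists>\<gamma>. \<beta> < \<gamma> \<and> \<gamma> < \<alpha>)"

end

theory Submission
  imports Defs
begin

text \<open>
  Write S for the union of the sets h^n(A_n). All A_n and hence S lie
  in the subgroup H, and for a subset of a subgroup H membership in tau X only has to
  be tested against translates gS with g \<in> H - {1} (tau_subgroup_criterion). Given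
  such g, expansiveness gives N with g \<notin> h^N(H); all sets h^n(A_n) with n \<ge> N lie in
  the subgroup h^N(H), so S \<inter> gS is covered by the finitely many sets h^n(A_n) and
  g h^n(A_n) with n < N. These lie below alpha because h preserves every level of the
  hierarchy (by h-invariance of F and induction, tau_pow_image), and the levels below
  a nonzero limit alpha are closed under finite unions of subsets of the torsion-free
  subgroup H (tau_below_limit_unions). The latter is the combinatorial heart: one
  application of tau costs finitely many successor steps for unions of m sets, which
  is shown by a pigeonhole argument on intersections of translates over finite sets
  W \<subseteq> H that grow strictly under nontrivial translations (translate_meet_levels).
  The locales assume the empty set in F; this follows from the hypotheses except in
  the trivial group, where every subset lies in every nonzero level anyway.
\<close>

context group
begin

lemma lcos_mem: "z \<in> x <# S \<longleftrightarrow> (\<exists>s\<in>S. z = x \<otimes> s)"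
  by (auto simp: l_coset_def)

lemma lcos_mono: "A \<subseteq> B \<Longrightarrow> x <# A \<subseteq> x <# B"
  by (auto simp: l_coset_def)

lemma lcos_image: "x <# W = (\<lambda>w. x \<otimes> w) ` W"
  by (auto simp: l_coset_def)

lemma lcos_Int: "x \<in> carrier G \<Longrightarrow> A \<subseteq> carrier G \<Longrightarrow> B \<subseteq> carrier G \<Longrightarrow>
  x <# (A \<inter> B) = (x <# A) \<inter> (x <# B)"
  unfolding lcos_image by (rule inj_on_image_Int[of _ "carrier G"]) (auto simp: inj_on_def)

lemma lcos_in_subgroup: "subgroup L G \<Longrightarrow> w \<in> L \<Longrightarrow> C \<subseteq> L \<Longrightarrow> w <# C \<subseteq> L"
  by (auto simp: lcos_mem intro!: subgroup.m_closed[of L G])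

text \<open>Two translates of a subset of a subgroup L by an element outside L are disjoint:
  a common point would exhibit g as a quotient of two elements of L.\<close>
lemma translate_disjoint:
  assumes L: "subgroup L G" and S: "S \<subseteq> L" and g: "g \<in> carrier G" "g \<notin> L"
  shows "S \<inter> (g <# S) = {}"
proof (rule ccontr)
  assume "S \<inter> (g <# S) \<noteq> {}"
  then obtain s s' where s: "s \<in> S" "s' \<in> S" "s = g \<otimes> s'" by (auto simp: l_coset_def)
  have "s \<in> carrier G" "s' \<in> carrier G" using s S subgroup.subset[OF L] by auto
  then have "g = s \<otimes> inv s'" using s g inv_solve_right by blast
  then have "g \<in> L" using s S L by (metis subgroup.m_closed subgroup.m_inv_closed subsetD)
  with g show False by blast
qed

end

section \<open>The operator tau\<close>

definition hereditary_invariant :: "('a, 'b) monoid_scheme \<Rightarrow> 'a set set \<Rightarrow> bool" where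
  "hereditary_invariant G X \<longleftrightarrow> {} \<in> X \<and> (\<forall>A\<in>X. \<forall>B\<subseteq>A. B \<in> X) \<and>
     (\<forall>A\<in>X. \<forall>x\<in>carrier G. x <#\<^bsub>G\<^esub> A \<in> X)"

context group
begin

lemma tauI:
  "S \<subseteq> carrier G \<Longrightarrow>
   (\<And>x y. x \<in> carrier G \<Longrightarrow> y \<in> carrier G \<Longrightarrow> x \<noteq> y \<Longrightarrow> (x <# S) \<inter> (y <# S) \<in> X) \<Longrightarrow>
   S \<in> tau G X"
  unfolding tau_def by simp

lemma tauD:
  "S \<in> tau G X \<Longrightarrow> x \<in> carrier G \<Longrightarrow> y \<in> carrier G \<Longrightarrow> x \<noteq> y \<Longrightarrow> (x <# S) \<inter> (y <# S) \<in> X"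
  unfolding tau_def by simp

lemma tau_subset_carrier: "S \<in> tau G X \<Longrightarrow> S \<subseteq> carrier G"
  unfolding tau_def by simp

lemma tau_down:
  assumes down: "\<forall>A\<in>X. \<forall>B\<subseteq>A. B \<in> X" and A: "A \<in> tau G X" and BA: "B \<subseteq> A"
  shows "B \<in> tau G X"
proof (rule tauI)
  show "B \<subseteq> carrier G" using tau_subset_carrier[OF A] BA by blast
  fix x y assume "x \<in> carrier G" "y \<in> carrier G" "x \<noteq> y"
  then have "(x <# A) \<inter> (y <# A) \<in> X" by (rule tauD[OF A])
  moreover have "(x <# B) \<inter> (y <# B) \<subseteq> (x <# A) \<inter> (y <# A)" using lcos_mono[OF BA] by blast
  ultimately show "(x <# B) \<inter> (y <# B) \<in> X" using down by blast
qed

lemma tau_translate: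
  assumes A: "A \<in> tau G X" and x: "x \<in> carrier G"
  shows "x <# A \<in> tau G X"
proof (rule tauI)
  have AC: "A \<subseteq> carrier G" by (rule tau_subset_carrier[OF A])
  then show "x <# A \<subseteq> carrier G" using x by (rule l_coset_subset_G)
  fix u v assume uv: "u \<in> carrier G" "v \<in> carrier G" "u \<noteq> v"
  then have "u \<otimes> x \<noteq> v \<otimes> x" using x by simp
  then have "((u \<otimes> x) <# A) \<inter> ((v \<otimes> x) <# A) \<in> X" using tauD[OF A] uv x by simp
  then show "(u <# (x <# A)) \<inter> (v <# (x <# A)) \<in> X" using AC uv x by (simp add: lcos_m_assoc)
qed

text \<open>The intersection of two translates xS and yS is a translate of S \<inter> (inv x y)S, and
  the latter is empty unless inv x y lies in L.\<close>
lemma tau_subgroup_criterion: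
  assumes L: "subgroup L G" and SL: "S \<subseteq> L" and X: "hereditary_invariant G X"
    and hyp: "\<And>g. g \<in> L \<Longrightarrow> g \<noteq> \<one> \<Longrightarrow> S \<inter> (g <# S) \<in> X"
  shows "S \<in> tau G X"
proof (rule tauI)
  have SC: "S \<subseteq> carrier G" using SL subgroup.subset[OF L] by blast
  then show "S \<subseteq> carrier G" .
  fix x y assume xy: "x \<in> carrier G" "y \<in> carrier G" "x \<noteq> y"
  define g where "g = inv x \<otimes> y"
  have g: "g \<in> carrier G" "g \<noteq> \<one>" using xy inv_solve_left' by (auto simp: g_def)
  have "y <# S = x <# (g <# S)" using xy SC by (simp add: g_def lcos_m_assoc m_assoc[symmetric])
  then have "(x <# S) \<inter> (y <# S) = x <# (S \<inter> (g <# S))"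
    using xy SC g(1) by (simp add: lcos_Int l_coset_subset_G)
  moreover have "S \<inter> (g <# S) \<in> X"
    using hyp[OF _ g(2)] translate_disjoint[OF L SL g(1)] X
    by (cases "g \<in> L") (auto simp: hereditary_invariant_def)
  ultimately show "(x <# S) \<inter> (y <# S) \<in> X" using X xy by (simp add: hereditary_invariant_def)
qed

end

section \<open>The transfinite hierarchy\<close>

lemma tau_pow_unfold:
  "tau_pow G F (b::'o::wellorder) = (if \<exists>c. c < b then tau G (tau_below G F b) else F)"
proof -
  have "wf {(x, y). x < (y::'o)}" using wf by (simp add: wf_def)
  then show ?thesis unfolding tau_pow_def tau_below_def
    by (subst wfrec) (simp_all add: cut_def)
qed

lemma tau_below_iff: "A \<in> tau_below G F b \<longleftrightarrow> (\<exists>c<b. A \<in> tau_pow G F c)"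
  unfolding tau_below_def by blast

locale tau_ideal = group G for G (structure) +
  fixes F :: "'a set set"
  assumes ideal: "is_ideal G F" and left_inv: "left_invariant G F" and empty_in: "{} \<in> F"
begin

lemma F_down: "A \<in> F \<Longrightarrow> B \<subseteq> A \<Longrightarrow> B \<in> F"
  using ideal unfolding is_ideal_def by blast

lemma F_Un: "A \<in> F \<Longrightarrow> B \<in> F \<Longrightarrow> A \<union> B \<in> F"
  using ideal unfolding is_ideal_def by blast

lemma F_Union: "finite \<C> \<Longrightarrow> \<C> \<subseteq> F \<Longrightarrow> \<Union>\<C> \<in> F"
  by (induction rule: finite_induct) (auto simp: empty_in F_Un)

lemma tau_pow_subset_carrier: "A \<in> tau_pow G F (b::'o::wellorder) \<Longrightarrow> A \<subseteq> carrier G"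
  using ideal tau_pow_unfold[of G F b] tau_subset_carrier unfolding is_ideal_def
  by (cases "\<exists>c. c < b") auto

lemma tau_pow_down: "A \<in> tau_pow G F (b::'o::wellorder) \<Longrightarrow> B \<subseteq> A \<Longrightarrow> B \<in> tau_pow G F b"
proof (induction b arbitrary: A B rule: less_induct)
  case (less b)
  show ?case
  proof (cases "\<exists>c. c < b")
    case True
    have down: "\<forall>Z\<in>tau_below G F b. \<forall>B\<subseteq>Z. B \<in> tau_below G F b"
      using less.IH unfolding tau_below_def by blast
    have "A \<in> tau G (tau_below G F b)" using less.prems(1) True by (subst (asm) tau_pow_unfold) simp
    then have "B \<in> tau G (tau_below G F b)" using tau_down[OF down _ less.prems(2)] by blast
    then show ?thesis using True by (subst tau_pow_unfold) simp
  next
    case False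
    then show ?thesis using less.prems F_down by (subst (asm) tau_pow_unfold, subst tau_pow_unfold) simp
  qed
qed

lemma tau_pow_translate: "A \<in> tau_pow G F (b::'o::wellorder) \<Longrightarrow> x \<in> carrier G \<Longrightarrow> x <# A \<in> tau_pow G F b"
  using left_inv unfolding left_invariant_def
  by (subst (asm) tau_pow_unfold, subst tau_pow_unfold) (auto split: if_splits intro: tau_translate)

lemma tau_pow_empty: "{} \<in> tau_pow G F (b::'o::wellorder)"
proof (induction b rule: less_induct)
  case (less b)
  then have "\<exists>c. c < b \<Longrightarrow> {} \<in> tau G (tau_below G F b)"
    by (intro tauI) (auto simp: l_coset_def tau_below_iff)
  then show ?case using empty_in by (subst tau_pow_unfold) auto
qed

lemma tau_below_hereditary:
  assumes "c < b" shows "hereditary_invariant G (tau_below G F (b::'o::wellorder))"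
  unfolding hereditary_invariant_def
proof (intro conjI ballI allI impI)
  show "{} \<in> tau_below G F b" using assms tau_pow_empty unfolding tau_below_iff by blast
next
  fix A B assume "A \<in> tau_below G F b" "B \<subseteq> A"
  then show "B \<in> tau_below G F b" using tau_pow_down unfolding tau_below_iff by blast
next
  fix A x assume "A \<in> tau_below G F b" "x \<in> carrier G"
  then show "x <# A \<in> tau_below G F b" using tau_pow_translate unfolding tau_below_iff by blast
qed

text \<open>Each set of a lower level is in tau of the union of the lower levels, because
  its pairwise intersections of translates stay in that lower level.\<close>
lemma tau_below_subset: "tau_below G F (b::'o::wellorder) \<subseteq> tau_pow G F b"
proof
  fix A assume "A \<in> tau_below G F b"
  then obtain c where c: "c < b" "A \<in> tau_pow G F c" unfolding tau_below_iff by blast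
  have "A \<in> tau G (tau_below G F b)"
  proof (rule tauI)
    show "A \<subseteq> carrier G" using tau_pow_subset_carrier c(2) .
    fix x y assume "x \<in> carrier G" "y \<in> carrier G" "x \<noteq> y"
    then have "x <# A \<in> tau_pow G F c" using tau_pow_translate[OF c(2)] by blast
    then have "(x <# A) \<inter> (y <# A) \<in> tau_pow G F c" by (rule tau_pow_down) blast
    then show "(x <# A) \<inter> (y <# A) \<in> tau_below G F b" using c(1) unfolding tau_below_iff by blast
  qed
  then show "A \<in> tau_pow G F b" using c(1) by (subst tau_pow_unfold) auto
qed

lemma tau_pow_mono: "(b::'o::wellorder) \<le> c \<Longrightarrow> tau_pow G F b \<subseteq> tau_pow G F c"
proof (cases "b = c")
  case False
  assume "b \<le> c"
  with False have "b < c" by simp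
  then have "tau_pow G F b \<subseteq> tau_below G F c" by (auto simp: tau_below_iff)
  then show ?thesis using tau_below_subset by blast
qed simp

lemma tau_below_finite:
  "finite \<D> \<Longrightarrow> \<D> \<subseteq> tau_below G F (d::'o::wellorder) \<Longrightarrow> c0 < d \<Longrightarrow> \<exists>c<d. \<D> \<subseteq> tau_pow G F c"
proof (induction rule: finite_induct)
  case empty
  then show ?case by blast
next
  case (insert A \<D>)
  have "\<D> \<subseteq> tau_below G F d" "A \<in> tau_below G F d" using insert.prems by auto
  then obtain c c' where c: "c < d" "\<D> \<subseteq> tau_pow G F c" and c': "c' < d" "A \<in> tau_pow G F c'"
    using insert.IH insert.prems(2) unfolding tau_below_iff by blast
  have "insert A \<D> \<subseteq> tau_pow G F (max c c')"
    using c c' tau_pow_mono[of c "max c c'"] tau_pow_mono[of c' "max c c'"] by auto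
  moreover have "max c c' < d" using c c' by simp
  ultimately show ?case by blast
qed

end

section \<open>Intersections of translates\<close>

text \<open>The intersection of the translates wS over a nonempty finite set W of group
  elements; for W = {1} it is S itself. Enlarging W shrinks it, and this is
  what makes finite unions controllable.\<close>
definition translate_meet :: "('a, 'b) monoid_scheme \<Rightarrow> 'a set \<Rightarrow> 'a set \<Rightarrow> 'a set" where
  "translate_meet G S W = (\<Inter>w\<in>W. w <#\<^bsub>G\<^esub> S)"

definition translate_cells :: "('a, 'b) monoid_scheme \<Rightarrow> 'a set set \<Rightarrow> 'a set \<Rightarrow> 'a set set" where
  "translate_cells G \<C> W =
     (\<lambda>(w, w', C). (w <#\<^bsub>G\<^esub> C) \<inter> (w' <#\<^bsub>G\<^esub> C)) ` {(w, w', C) \<in> W \<times> W \<times> \<C>. w \<noteq> w'}"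

context group
begin

lemma translate_meet_one: "S \<subseteq> carrier G \<Longrightarrow> translate_meet G S {\<one>} = S"
  by (simp add: translate_meet_def lcos_mult_one)

lemma translate_meet_subgroup:
  assumes "subgroup L G" "S \<subseteq> L" "W \<subseteq> L" "W \<noteq> {}"
  shows "translate_meet G S W \<subseteq> L"
proof -
  obtain w where "w \<in> W" using assms(4) by blast
  then have "translate_meet G S W \<subseteq> w <# S" unfolding translate_meet_def by blast
  also have "\<dots> \<subseteq> L" using lcos_in_subgroup assms \<open>w \<in> W\<close> by blast
  finally show ?thesis .
qed

lemma translate_meet_inter:
  assumes S: "S \<subseteq> carrier G" and W: "W \<subseteq> carrier G" and g: "g \<in> carrier G"
  shows "translate_meet G S W \<inter> (g <# translate_meet G S W) \<subseteq> translate_meet G S (W \<union> (g <# W))"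
proof -
  have "g <# translate_meet G S W \<subseteq> (g \<otimes> w) <# S" if "w \<in> W" for w
  proof -
    have "g <# translate_meet G S W \<subseteq> g <# (w <# S)"
      using that by (intro lcos_mono) (auto simp: translate_meet_def)
    then show ?thesis using that S W g by (simp add: lcos_m_assoc subsetD)
  qed
  moreover have "w' \<in> g <# W \<Longrightarrow> \<exists>w\<in>W. w' = g \<otimes> w" for w' by (simp add: lcos_mem)
  ultimately have "g <# translate_meet G S W \<subseteq> w' <# S" if "w' \<in> g <# W" for w'
    using that by blast
  then show ?thesis unfolding translate_meet_def by blast
qed

text \<open>Pigeonhole: if W has more elements than \<C>, a point of the meet of \<Union>\<C> over W
  lies in two translates wC, w'C of the same member C.\<close>
lemma translate_meet_cells:
  assumes fin: "finite \<C>" "finite W" and lt: "card \<C> < card W"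
  shows "translate_meet G (\<Union>\<C>) W \<subseteq> \<Union>(translate_cells G \<C> W)"
proof
  fix z assume "z \<in> translate_meet G (\<Union>\<C>) W"
  then have "\<forall>w\<in>W. \<exists>C\<in>\<C>. z \<in> w <# C" by (auto simp: translate_meet_def lcos_mem)
  then obtain f where f: "\<And>w. w \<in> W \<Longrightarrow> f w \<in> \<C> \<and> z \<in> w <# f w" by metis
  have "\<not> inj_on f W"
  proof
    assume "inj_on f W"
    then have "card W \<le> card \<C>" using card_inj_on_le[of f W \<C>] f fin by blast
    with lt show False by simp
  qed
  then obtain w w' where "w \<in> W" "w' \<in> W" "w \<noteq> w'" "f w = f w'" unfolding inj_on_def by blast
  with f show "z \<in> \<Union>(translate_cells G \<C> W)" unfolding translate_cells_def by force
qed

lemma translate_cells_size: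
  assumes fin: "finite \<C>" "finite W"
  shows "finite (translate_cells G \<C> W)" "card (translate_cells G \<C> W) \<le> card W * card W * card \<C>"
proof -
  let ?I = "{(w, w', C) \<in> W \<times> W \<times> \<C>. w \<noteq> w'}"
  have sub: "?I \<subseteq> W \<times> W \<times> \<C>" by auto
  then have finI: "finite ?I" using fin finite_subset by blast
  then show "finite (translate_cells G \<C> W)" unfolding translate_cells_def by simp
  have "card (translate_cells G \<C> W) \<le> card ?I" unfolding translate_cells_def
    using finI by (rule card_image_le)
  also have "\<dots> \<le> card (W \<times> W \<times> \<C>)" using fin sub by (intro card_mono) auto
  finally show "card (translate_cells G \<C> W) \<le> card W * card W * card \<C>"
    by (simp add: card_cartesian_product)
qed

text \<open>In a torsion-free subgroup no nonempty finite set is invariant under a nontrivial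
  translation, since it would contain the infinite orbit of one of its points.\<close>
lemma card_translate_union_grows:
  assumes tf: "torsion_free_subgroup G H"
    and W: "finite W" "W \<subseteq> H" "W \<noteq> {}" and g: "g \<in> H" "g \<noteq> \<one>"
  shows "card W < card (W \<union> (g <# W))"
proof (rule ccontr)
  have H: "subgroup H G" using tf unfolding torsion_free_subgroup_def by blast
  have gc: "g \<in> carrier G" using g subgroup.subset[OF H] by blast
  assume "\<not> card W < card (W \<union> (g <# W))"
  moreover have "finite (W \<union> (g <# W))" using W by (simp add: lcos_image)
  ultimately have "W = W \<union> (g <# W)" by (intro card_seteq) auto
  then have step: "g \<otimes> x \<in> W" if "x \<in> W" for x
    using that by (metis UnCI lcos_mem)
  obtain w where w: "w \<in> W" using W by blast
  have wc: "w \<in> carrier G" using w W subgroup.subset[OF H] by blast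
  have orbit: "g [^] n \<otimes> w \<in> W" for n :: nat
  proof (induction n)
    case (Suc n)
    then have "g \<otimes> (g [^] n \<otimes> w) \<in> W" by (rule step)
    then show ?case using gc wc by (subst nat_pow_Suc2[OF gc]) (simp add: m_assoc)
  qed (use w wc in simp)
  have "\<not> inj (\<lambda>n::nat. g [^] n \<otimes> w)"
  proof
    assume "inj (\<lambda>n::nat. g [^] n \<otimes> w)"
    moreover have "finite (range (\<lambda>n::nat. g [^] n \<otimes> w))"
      using orbit W(1) by (meson finite_subset image_subsetI)
    ultimately show False using finite_imageD by fastforce
  qed
  then obtain i j :: nat where ij: "i < j" "g [^] i = g [^] j"
    unfolding inj_def using gc wc by (metis linorder_neqE_nat nat_pow_closed right_cancel)
  then have "g [^] (j - i) = \<one>" using gc by (intro pow_eq_div2) auto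
  then show False using tf g ij(1) unfolding torsion_free_subgroup_def by auto
qed

lemma card_translate_union_le: "finite W \<Longrightarrow> card (W \<union> (g <# W)) \<le> 2 * card W"
  using card_Un_le[of W "g <# W"] card_image_le[of W "\<lambda>w. g \<otimes> w"] by (simp add: lcos_image)

end

text \<open>The successor of r in the well-order (meaningful when r is not maximal).\<close>
definition next_ord :: "'o::wellorder \<Rightarrow> 'o" where
  "next_ord r = (LEAST g. r < g)"

text \<open>g stays below every nonzero limit that lies above d, i.e. g < d + \<omega>; this is the
  invariant needed to keep finitely many successor steps below a limit.\<close>
definition below_next_limit :: "'o::wellorder \<Rightarrow> 'o \<Rightarrow> bool" where
  "below_next_limit d g \<longleftrightarrow> (\<forall>l. nonzero_limit l \<and> d < l \<longrightarrow> g < l)"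

lemma next_ord_bounds:
  assumes "r < a" "nonzero_limit a"
  shows "r < next_ord r" "next_ord r < a"
proof -
  obtain g where g: "r < g" "g < a" using assms unfolding nonzero_limit_def by blast
  show "r < next_ord r" unfolding next_ord_def using g(1) by (rule LeastI)
  have "next_ord r \<le> g" unfolding next_ord_def using g(1) by (rule Least_le)
  then show "next_ord r < a" using g(2) by simp
qed

lemma next_ord_iterate_below: "r < a \<Longrightarrow> nonzero_limit a \<Longrightarrow> (next_ord ^^ k) r < a"
  by (induction k) (auto intro: next_ord_bounds(2))

lemma below_next_limit_iterate:
  "below_next_limit d r \<Longrightarrow> below_next_limit d ((next_ord ^^ k) r)"
  unfolding below_next_limit_def using next_ord_iterate_below by blast

lemma below_next_limit_mono: "below_next_limit c g \<Longrightarrow> c \<le> d \<Longrightarrow> below_next_limit d g"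
  unfolding below_next_limit_def by force

section \<open>Finite unions of small families\<close>

definition small_unions_in :: "'a set \<Rightarrow> nat \<Rightarrow> 'a set set \<Rightarrow> 'a set set \<Rightarrow> bool" where
  "small_unions_in H m X Y \<longleftrightarrow> (\<forall>\<C>. finite \<C> \<longrightarrow> card \<C> \<le> m \<longrightarrow> \<C> \<subseteq> X \<inter> Pow H \<longrightarrow> \<Union>\<C> \<in> Y)"

lemma small_unions_inD:
  "small_unions_in H m X Y \<Longrightarrow> finite \<C> \<Longrightarrow> card \<C> \<le> m \<Longrightarrow> \<C> \<subseteq> X \<inter> Pow H \<Longrightarrow> \<Union>\<C> \<in> Y"
  unfolding small_unions_in_def by blast

lemma small_unions_in_mono:
  "small_unions_in H m X' Y \<Longrightarrow> X \<subseteq> X' \<Longrightarrow> Y \<subseteq> Y' \<Longrightarrow> small_unions_in H m X Y'"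
  unfolding small_unions_in_def by blast

context tau_ideal
begin

text \<open>From the levels below d to their union: at a limit d finitely many sets of
  lower levels already lie in one lower level; at a successor d = c + 1 the union is
  level c itself.\<close>
lemma small_unions_tau_below:
  assumes "c0 < d"
    and IH: "\<And>c. c < d \<Longrightarrow> \<exists>g. below_next_limit c g \<and> small_unions_in H M (tau_pow G F c) (tau_pow G F g)"
  shows "\<exists>r. below_next_limit d r \<and> small_unions_in H M (tau_below G F (d::'o::wellorder)) (tau_pow G F r)"
proof (cases "nonzero_limit d")
  case True
  have "small_unions_in H M (tau_below G F d) (tau_pow G F d)"
    unfolding small_unions_in_def
  proof (intro allI impI)
    fix \<D> assume \<D>: "finite \<D>" "card \<D> \<le> M" "\<D> \<subseteq> tau_below G F d \<inter> Pow H"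
    then obtain c where c: "c < d" "\<D> \<subseteq> tau_pow G F c" using tau_below_finite assms(1) by blast
    then obtain g where g: "below_next_limit c g" "small_unions_in H M (tau_pow G F c) (tau_pow G F g)"
      using IH by blast
    have "g < d" using g(1) c(1) True unfolding below_next_limit_def by blast
    moreover have "\<Union>\<D> \<in> tau_pow G F g" using small_unions_inD[OF g(2) \<D>(1,2)] \<D>(3) c(2) by blast
    ultimately show "\<Union>\<D> \<in> tau_pow G F d" using tau_pow_mono[of g d] by (auto simp: less_imp_le)
  qed
  then show ?thesis unfolding below_next_limit_def by blast
next
  case False
  then obtain c where c: "c < d" "\<And>e. c < e \<Longrightarrow> \<not> e < d"
    using assms(1) unfolding nonzero_limit_def by blast
  have "tau_below G F d \<subseteq> tau_pow G F c"
    using c tau_pow_mono unfolding tau_below_def by (blast dest: not_less[THEN iffD1])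
  moreover obtain g where "below_next_limit c g" "small_unions_in H M (tau_pow G F c) (tau_pow G F g)"
    using IH c(1) by blast
  ultimately show ?thesis using below_next_limit_mono c(1) small_unions_in_mono by (meson less_imp_le order_refl)
qed

end

locale subgroup_tau = tau_ideal +
  fixes H :: "'a set"
  assumes subgroup_H: "subgroup H G"
begin

lemma H_carrier: "H \<subseteq> carrier G"
  using subgroup_H subgroup.subset by blast

text \<open>Base of the cube argument: if \<C> \<subseteq> tau X has fewer members than W, the meet of
  \<Union>\<C> over W is covered by at most |W|^2 |\<C>| cells, which are members of X.\<close>
lemma translate_meet_base:
  assumes unions: "small_unions_in H M X Y" and Y: "\<forall>A\<in>Y. \<forall>B\<subseteq>A. B \<in> Y"
    and \<C>: "finite \<C>" "\<C> \<subseteq> tau G X \<inter> Pow H"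
    and W: "finite W" "W \<subseteq> H" "card \<C> < card W" "card W * card W * card \<C> \<le> M"
  shows "translate_meet G (\<Union>\<C>) W \<in> Y"
proof -
  have "translate_cells G \<C> W \<subseteq> X \<inter> Pow H"
  proof
    fix Z assume "Z \<in> translate_cells G \<C> W"
    then obtain w w' C where ww: "w \<in> W" "w' \<in> W" "w \<noteq> w'" "C \<in> \<C>" and Z: "Z = (w <# C) \<inter> (w' <# C)"
      unfolding translate_cells_def by auto
    have "Z \<in> X" using Z ww \<C>(2) W(2) H_carrier by (auto intro: tauD)
    moreover have "Z \<subseteq> H" using Z ww \<C>(2) W(2) lcos_in_subgroup[OF subgroup_H] by blast
    ultimately show "Z \<in> X \<inter> Pow H" by blast
  qed
  moreover have "card (translate_cells G \<C> W) \<le> M"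
    using translate_cells_size(2)[OF \<C>(1) W(1)] W(4) by linarith
  moreover have "finite (translate_cells G \<C> W)" using translate_cells_size(1)[OF \<C>(1) W(1)] .
  ultimately have "\<Union>(translate_cells G \<C> W) \<in> Y" using small_unions_inD[OF unions] by blast
  then show ?thesis using Y translate_meet_cells[OF \<C>(1) W(1,3)] by blast
qed

end

text \<open>The subgroup H is now also torsion-free, so translates of finite subsets of H
  by nontrivial elements of H always add new points.\<close>
locale torsion_free_tau = subgroup_tau +
  assumes torsion_free: "torsion_free_subgroup G H"
begin

text \<open>The cube argument. Let \<C> \<subseteq> tau X with |\<C>| \<le> m and suppose unions of at most 4^m m
  members of X lie in level r. For W \<subseteq> H with m < |W| + k and |W| 2^k \<le> 2^m, the meet
  of \<Union>\<C> over W lies k successor steps above r: for k = 0 by the pigeonhole base,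
  and in the step because its intersection with its g-translate is the meet over the
  strictly larger set W \<union> gW, of at most twice the size.\<close>
lemma translate_meet_levels:
  assumes lim: "nonzero_limit a" "r < a"
    and unions: "small_unions_in H (4 ^ m * m) X (tau_pow G F r)"
    and \<C>: "finite \<C>" "card \<C> \<le> m" "\<C> \<subseteq> tau G X \<inter> Pow H"
  shows "finite W \<Longrightarrow> W \<subseteq> H \<Longrightarrow> W \<noteq> {} \<Longrightarrow> m < card W + k \<Longrightarrow> card W * 2 ^ k \<le> 2 ^ m \<Longrightarrow>
    translate_meet G (\<Union>\<C>) W \<in> tau_pow G F ((next_ord ^^ k) (r::'o::wellorder))"
proof (induction k arbitrary: W)
  case 0
  have "card W * card W * card \<C> \<le> 2 ^ m * 2 ^ m * m" using 0 \<C>(2) by (intro mult_mono) auto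
  then have "card W * card W * card \<C> \<le> 4 ^ m * m" by (simp add: power_mult_distrib[symmetric])
  moreover have "card \<C> < card W" using 0 \<C>(2) by simp
  moreover have "\<forall>A\<in>tau_pow G F r. \<forall>B\<subseteq>A. B \<in> tau_pow G F r" by (auto intro: tau_pow_down)
  ultimately have "translate_meet G (\<Union>\<C>) W \<in> tau_pow G F r"
    using translate_meet_base[OF unions _ \<C>(1,3) "0.prems"(1,2)] by blast
  then show ?case by simp
next
  case (Suc k)
  define r' where "r' = (next_ord ^^ k) r"
  have "r' < a" unfolding r'_def using next_ord_iterate_below lim by blast
  then have r': "r' < next_ord r'" using next_ord_bounds(1) lim(1) by blast
  have level: "tau_pow G F (next_ord r') = tau G (tau_below G F (next_ord r'))"
    using r' by (subst tau_pow_unfold) auto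
  have X: "hereditary_invariant G (tau_below G F (next_ord r'))" using tau_below_hereditary r' .
  have SH: "\<Union>\<C> \<subseteq> H" using \<C>(3) by blast
  have SC: "\<Union>\<C> \<subseteq> carrier G" using SH H_carrier by blast
  have WC: "W \<subseteq> carrier G" using Suc.prems(2) H_carrier by blast
  have "translate_meet G (\<Union>\<C>) W \<in> tau G (tau_below G F (next_ord r'))"
  proof (rule tau_subgroup_criterion[OF subgroup_H _ X])
    show "translate_meet G (\<Union>\<C>) W \<subseteq> H"
      using translate_meet_subgroup[OF subgroup_H SH Suc.prems(2,3)] .
    fix g assume g: "g \<in> H" "g \<noteq> \<one>"
    define W' where "W' = W \<union> (g <# W)"
    have grow: "card W < card W'"
      unfolding W'_def using card_translate_union_grows[OF torsion_free Suc.prems(1-3) g] .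
    have "card W' \<le> 2 * card W"
      unfolding W'_def using card_translate_union_le[OF Suc.prems(1)] .
    then have "card W' * 2 ^ k \<le> card W * 2 ^ Suc k" by simp
    then have bound: "card W' * 2 ^ k \<le> 2 ^ m" using Suc.prems(5) by linarith
    have "finite W'" "W' \<subseteq> H" "W' \<noteq> {}"
      unfolding W'_def using Suc.prems(1-3) lcos_in_subgroup[OF subgroup_H g(1)]
      by (auto simp: lcos_image)
    moreover have "m < card W' + k" using Suc.prems(4) grow by linarith
    ultimately have "translate_meet G (\<Union>\<C>) W' \<in> tau_pow G F r'"
      unfolding r'_def using bound by (rule Suc.IH)
    then have "translate_meet G (\<Union>\<C>) W' \<in> tau_below G F (next_ord r')"
      using r' unfolding tau_below_iff by blast
    moreover have "translate_meet G (\<Union>\<C>) W \<inter> (g <# translate_meet G (\<Union>\<C>) W) \<subseteq>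
        translate_meet G (\<Union>\<C>) W'"
      unfolding W'_def using translate_meet_inter[OF SC WC] g(1) H_carrier by blast
    ultimately show "translate_meet G (\<Union>\<C>) W \<inter> (g <# translate_meet G (\<Union>\<C>) W) \<in>
        tau_below G F (next_ord r')"
      using X unfolding hereditary_invariant_def by blast
  qed
  then show ?case using level unfolding r'_def by simp
qed

text \<open>One application of tau costs only finitely many levels for small unions: taking
  W = {1} and k = m in the cube argument.\<close>
lemma small_unions_step:
  assumes "nonzero_limit a" "r < a"
    and "small_unions_in H (4 ^ m * m) X (tau_pow G F r)"
  shows "small_unions_in H m (tau G X) (tau_pow G F ((next_ord ^^ m) (r::'o::wellorder)))"
  unfolding small_unions_in_def
proof (intro allI impI)
  fix \<C> assume \<C>: "finite \<C>" "card \<C> \<le> m" "\<C> \<subseteq> tau G X \<inter> Pow H"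
  have "translate_meet G (\<Union>\<C>) {\<one>} \<in> tau_pow G F ((next_ord ^^ m) r)"
    using translate_meet_levels[OF assms \<C>] subgroup.one_closed[OF subgroup_H] by simp
  moreover have "\<Union>\<C> \<subseteq> carrier G" using \<C>(3) H_carrier by blast
  ultimately show "\<Union>\<C> \<in> tau_pow G F ((next_ord ^^ m) r)" by (simp add: translate_meet_one)
qed

lemma small_unions_tau_pow:
  assumes "nonzero_limit a" "d < a"
  shows "\<exists>g. below_next_limit d g \<and> small_unions_in H m (tau_pow G F d) (tau_pow G F (g::'o::wellorder))"
  using assms(2)
proof (induction d arbitrary: m rule: less_induct)
  case (less d)
  show ?case
  proof (cases "\<exists>c. c < d")
    case False
    then have "tau_pow G F d = F" by (subst tau_pow_unfold) simp
    then have "small_unions_in H m (tau_pow G F d) (tau_pow G F d)"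
      unfolding small_unions_in_def by (auto intro: F_Union)
    then show ?thesis unfolding below_next_limit_def by blast
  next
    case True
    then obtain c0 where "c0 < d" by blast
    have IH: "\<exists>g. below_next_limit c g \<and> small_unions_in H (4 ^ m * m) (tau_pow G F c) (tau_pow G F g)"
      if "c < d" for c
      using less.IH[of c "4 ^ m * m"] that less.prems by simp
    obtain r where r: "below_next_limit d r" "small_unions_in H (4 ^ m * m) (tau_below G F d) (tau_pow G F r)"
      using small_unions_tau_below[OF \<open>c0 < d\<close> IH] by blast
    have "r < a" using r(1) assms(1) less.prems unfolding below_next_limit_def by blast
    then have "small_unions_in H m (tau G (tau_below G F d)) (tau_pow G F ((next_ord ^^ m) r))"
      by (rule small_unions_step[OF assms(1) _ r(2)])
    moreover have "tau_pow G F d = tau G (tau_below G F d)" using True by (subst tau_pow_unfold) simp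
    ultimately show ?thesis using below_next_limit_iterate[OF r(1)] by metis
  qed
qed

lemma tau_below_limit_unions:
  assumes lim: "nonzero_limit a" and \<C>: "finite \<C>" "\<C> \<subseteq> tau_below G F (a::'o::wellorder) \<inter> Pow H"
  shows "\<Union>\<C> \<in> tau_below G F a"
proof -
  obtain c0 where "c0 < a" using lim unfolding nonzero_limit_def by blast
  then obtain c where c: "c < a" "\<C> \<subseteq> tau_pow G F c"
    using tau_below_finite[OF \<C>(1)] \<C>(2) by blast
  obtain g where g: "below_next_limit c g" "small_unions_in H (card \<C>) (tau_pow G F c) (tau_pow G F g)"
    using small_unions_tau_pow[OF lim c(1)] by blast
  have "g < a" using g(1) c(1) lim unfolding below_next_limit_def by blast
  moreover have "\<Union>\<C> \<in> tau_pow G F g" using small_unions_inD[OF g(2) \<C>(1)] \<C>(2) c(2) by blast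
  ultimately show ?thesis unfolding tau_below_iff by blast
qed

end

section \<open>Transport along an injective endomorphism of H\<close>

lemma funpow_hom: "f \<in> hom M M \<Longrightarrow> f ^^ n \<in> hom M M"
proof (induction n)
  case 0
  show ?case by (simp add: hom_def)
next
  case (Suc n)
  then show ?case using Group.hom_compose[of "f ^^ n" M M f] by (simp add: comp_def)
qed

lemma hom_subgroup_codomain:
  "h \<in> hom (G\<lparr>carrier := H\<rparr>) (G\<lparr>carrier := K\<rparr>) \<Longrightarrow> K \<subseteq> H \<Longrightarrow> h \<in> hom (G\<lparr>carrier := H\<rparr>) (G\<lparr>carrier := H\<rparr>)"
  by (auto simp: hom_def)

locale endo_tau = subgroup_tau +
  fixes h :: "'a \<Rightarrow> 'a"
  assumes h_hom: "h \<in> hom (G\<lparr>carrier := H\<rparr>) (G\<lparr>carrier := H\<rparr>)"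
    and h_inj: "inj_on h H" and h_inv: "h_invariant H h F"
begin

lemma h_mult: "x \<in> H \<Longrightarrow> y \<in> H \<Longrightarrow> h (x \<otimes> y) = h x \<otimes> h y"
  using hom_mult[OF h_hom] by simp

lemma iterate_image_H: "S \<subseteq> H \<Longrightarrow> (h ^^ n) ` S \<subseteq> H"
  using hom_in_carrier[OF funpow_hom[OF h_hom]] by force

lemma iterate_image_subgroup: "subgroup ((h ^^ n) ` H) G"
proof -
  have "group_hom (G\<lparr>carrier := H\<rparr>) (G\<lparr>carrier := H\<rparr>) (h ^^ n)"
    using subgroup_imp_group[OF subgroup_H] funpow_hom[OF h_hom] by (simp add: group_hom_def group_hom_axioms_def)
  then have "subgroup ((h ^^ n) ` H) (G\<lparr>carrier := H\<rparr>)"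
    using group_hom.img_is_subgroup by fastforce
  then show ?thesis using incl_subgroup[OF subgroup_H] by blast
qed

lemma iterate_image_antimono: "N \<le> n \<Longrightarrow> (h ^^ n) ` H \<subseteq> (h ^^ N) ` H"
proof -
  assume "N \<le> n"
  then obtain k where "n = N + k" using le_Suc_ex by blast
  then have "(h ^^ n) ` H = (h ^^ N) ` ((h ^^ k) ` H)" by (simp add: funpow_add image_comp)
  then show ?thesis using iterate_image_H[of H k] by blast
qed

lemma image_translate_inter:
  assumes S: "S \<subseteq> H" and g: "g \<in> H"
  shows "h ` S \<inter> (h g <# h ` S) \<subseteq> h ` (S \<inter> (g <# S))"
proof
  fix z assume "z \<in> h ` S \<inter> (h g <# h ` S)"
  then obtain s s' where s: "s \<in> S" "s' \<in> S" "h s = h g \<otimes> h s'" "z = h s"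
    by (auto simp: lcos_mem)
  then have "h s = h (g \<otimes> s')" using S g h_mult by auto
  moreover have "g \<otimes> s' \<in> H" using S g s(2) subgroup.m_closed[OF subgroup_H] by blast
  ultimately have "s = g \<otimes> s'" using h_inj S s(1) by (auto dest: inj_onD)
  then have "s \<in> S \<inter> (g <# S)" using s(1,2) by (auto simp: lcos_mem)
  then show "z \<in> h ` (S \<inter> (g <# S))" using s(4) by blast
qed

text \<open>h maps every level of the hierarchy (restricted to subsets of H) into itself:
  at level 0 by h-invariance of F, and above by the subgroup criterion applied in the
  subgroup h(H), using the intersection formula and induction.\<close>
lemma tau_pow_image: "S \<subseteq> H \<Longrightarrow> S \<in> tau_pow G F (b::'o::wellorder) \<Longrightarrow> h ` S \<in> tau_pow G F b"
proof (induction b arbitrary: S rule: less_induct)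
  case (less b)
  show ?case
  proof (cases "\<exists>c. c < b")
    case False
    then show ?thesis using less.prems h_inv unfolding h_invariant_def
      by (subst (asm) tau_pow_unfold, subst tau_pow_unfold) simp
  next
    case True
    have S: "S \<in> tau G (tau_below G F b)" using less.prems True by (subst (asm) tau_pow_unfold) simp
    have X: "hereditary_invariant G (tau_below G F b)" using True tau_below_hereditary by blast
    have "h ` S \<in> tau G (tau_below G F b)"
    proof (rule tau_subgroup_criterion[OF _ _ X])
      show "subgroup (h ` H) G" using iterate_image_subgroup[of 1] by simp
      show "h ` S \<subseteq> h ` H" using less.prems(1) by blast
      fix g assume "g \<in> h ` H" "g \<noteq> \<one>"
      then obtain g0 where g0: "g0 \<in> H" "g = h g0" "g0 \<noteq> \<one>"
        using hom_one[OF h_hom] subgroup_imp_group[OF subgroup_H] by fastforce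
      have "(\<one> <# S) \<inter> (g0 <# S) \<in> tau_below G F b"
        using tauD[OF S] g0 H_carrier by blast
      then have "S \<inter> (g0 <# S) \<in> tau_below G F b"
        using lcos_mult_one less.prems(1) H_carrier by simp
      then obtain c where c: "c < b" "S \<inter> (g0 <# S) \<in> tau_pow G F c" unfolding tau_below_iff by blast
      then have "h ` (S \<inter> (g0 <# S)) \<in> tau_pow G F c" using less.IH less.prems(1) by blast
      then have "h ` S \<inter> (g <# h ` S) \<in> tau_pow G F c"
        using image_translate_inter[OF less.prems(1) g0(1)] g0(2) tau_pow_down by blast
      then show "h ` S \<inter> (g <# h ` S) \<in> tau_below G F b" using c(1) unfolding tau_below_iff by blast
    qed
    then show ?thesis using True by (subst tau_pow_unfold) simp
  qed
qed

lemma tau_pow_iterate: "S \<subseteq> H \<Longrightarrow> S \<in> tau_pow G F (b::'o::wellorder) \<Longrightarrow> (h ^^ n) ` S \<in> tau_pow G F b"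
proof (induction n)
  case (Suc n)
  then have "h ` ((h ^^ n) ` S) \<in> tau_pow G F b" using tau_pow_image iterate_image_H by blast
  then show ?case by (simp add: image_comp)
qed simp

end

section \<open>Unions of iterated images\<close>

text \<open>If all but the first N members of a sequence of sets lie in a subgroup D and
  g \<notin> D, then the union meets its g-translate only within the first N members and
  their g-translates: a common point of two late members would put g into D.\<close>
lemma (in group) translate_inter_cover:
  fixes P :: "nat \<Rightarrow> 'a set"
  assumes D: "subgroup D G" and g: "g \<in> carrier G" "g \<notin> D"
    and P: "\<And>n. P n \<subseteq> carrier G" and tail: "\<And>n. N \<le> n \<Longrightarrow> P n \<subseteq> D"
  shows "(\<Union>n. P n) \<inter> (g <# (\<Union>n. P n)) \<subseteq> (\<Union>n<N. P n \<union> (g <# P n))"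
proof
  fix z assume "z \<in> (\<Union>n. P n) \<inter> (g <# (\<Union>n. P n))"
  then obtain n p z' where n: "z \<in> P n" and p: "z' \<in> P p" "z = g \<otimes> z'" by (auto simp: lcos_mem)
  show "z \<in> (\<Union>n<N. P n \<union> (g <# P n))"
  proof (cases "n < N \<or> p < N")
    case True
    then show ?thesis using n p by (auto simp: lcos_mem)
  next
    case False
    then have "N \<le> n" "N \<le> p" by auto
    then have "z \<in> D" "z' \<in> D" using tail n p(1) by blast+
    moreover have "g = z \<otimes> inv z'" using p n P g(1) inv_solve_right by blast
    ultimately have "g \<in> D" using D by (simp add: subgroup.m_closed subgroup.m_inv_closed)
    with g(2) show ?thesis by blast
  qed
qed

locale expanding_tau = torsion_free_tau G F H + endo_tau G F H h
  for G (structure) and F H h +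
  assumes expanding: "expanding G H h"
begin

lemma union_of_iterates:
  assumes lim: "nonzero_limit (a::'o::wellorder)"
    and A: "\<And>n. A n \<in> tau_below G F a" "\<And>n. A n \<subseteq> H"
  shows "(\<Union>n. (h ^^ n) ` A n) \<in> tau_pow G F a"
proof -
  define P where "P n = (h ^^ n) ` A n" for n
  have PH: "P n \<subseteq> H" for n unfolding P_def using iterate_image_H A(2) .
  have P_below: "P n \<in> tau_below G F a" for n
    using A tau_pow_iterate unfolding P_def tau_below_iff by blast
  obtain c0 where c0: "c0 < a" using lim unfolding nonzero_limit_def by blast
  have X: "hereditary_invariant G (tau_below G F a)" using tau_below_hereditary c0 .
  have "(\<Union>n. P n) \<in> tau G (tau_below G F a)"
  proof (rule tau_subgroup_criterion[OF subgroup_H _ X])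
    show "(\<Union>n. P n) \<subseteq> H" using PH by blast
    fix g assume g: "g \<in> H" "g \<noteq> \<one>"
    then obtain N where N: "g \<notin> (h ^^ N) ` H" using expanding unfolding expanding_def by blast
    have gC: "g \<in> carrier G" using g(1) H_carrier by blast
    have PC: "P n \<subseteq> carrier G" for n using PH H_carrier by blast
    have tail: "P n \<subseteq> (h ^^ N) ` H" if "N \<le> n" for n
      using iterate_image_antimono[OF that] A(2) unfolding P_def by blast
    define \<C> where "\<C> = P ` {..<N} \<union> (\<lambda>n. g <# P n) ` {..<N}"
    have "(\<Union>n<N. P n \<union> (g <# P n)) = \<Union>\<C>" unfolding \<C>_def by blast
    then have cover: "(\<Union>n. P n) \<inter> (g <# (\<Union>n. P n)) \<subseteq> \<Union>\<C>"
      using translate_inter_cover[of "(h ^^ N) ` H" g P N, OF iterate_image_subgroup gC N PC tail] by simp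
    have "g <# P n \<in> tau_below G F a" for n
      using X P_below gC unfolding hereditary_invariant_def by blast
    moreover have "g <# P n \<subseteq> H" for n using lcos_in_subgroup[OF subgroup_H g(1) PH] .
    ultimately have "\<C> \<subseteq> tau_below G F a \<inter> Pow H" unfolding \<C>_def using P_below PH by blast
    then have "\<Union>\<C> \<in> tau_below G F a"
      by (intro tau_below_limit_unions[OF lim]) (auto simp: \<C>_def)
    with cover show "(\<Union>n. P n) \<inter> (g <# (\<Union>n. P n)) \<in> tau_below G F a"
      using X unfolding hereditary_invariant_def by blast
  qed
  then show ?thesis using c0 unfolding P_def by (subst tau_pow_unfold) auto
qed

end

text \<open>In the trivial group tau imposes no condition, so every subset of the carrier
  lies in every nonzero level.\<close>
lemma tau_pow_trivial_group:
  "\<forall>x\<in>carrier G. x = \<one>\<^bsub>G\<^esub> \<Longrightarrow> c < b \<Longrightarrow> S \<subseteq> carrier G \<Longrightarrow> S \<in> tau_pow G F (b::'o::wellorder)"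
  by (subst tau_pow_unfold) (auto simp: tau_def dest: bspec)

text \<open>In a nontrivial group, a nonempty level forces the ideal to contain the empty set:
  any member of tau X yields a member of X.\<close>
lemma (in group) ideal_contains_empty:
  assumes F: "is_ideal G F" and x: "x \<in> carrier G" "x \<noteq> \<one>"
  shows "A \<in> tau_pow G F (b::'o::wellorder) \<Longrightarrow> {} \<in> F"
proof (induction b arbitrary: A rule: less_induct)
  case (less b)
  show ?case
  proof (cases "\<exists>c. c < b")
    case True
    then have "A \<in> tau G (tau_below G F b)" using less.prems by (subst (asm) tau_pow_unfold) simp
    then have "(x <# A) \<inter> (\<one> <# A) \<in> tau_below G F b" using x by (intro tauD) auto
    then show ?thesis using less.IH unfolding tau_below_iff by blast
  next
    case False
    then have "A \<in> F" using less.prems by (subst (asm) tau_pow_unfold) simp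
    then show ?thesis using F unfolding is_ideal_def by blast
  qed
qed

theorem lemma6p5:
  fixes G :: "('a, 'b) monoid_scheme" and H K :: "'a set" and h :: "'a \<Rightarrow> 'a"
    and \<F> :: "'a set set" and \<alpha> :: "'o::wellorder" and A :: "nat \<Rightarrow> 'a set"
  assumes "group G"
    and "torsion_free_subgroup G H" and "torsion_free_subgroup G K" and "K \<subseteq> H"
    and "h \<in> iso (G\<lparr>carrier := H\<rparr>) (G\<lparr>carrier := K\<rparr>)"
    and "expanding G H h"
    and "is_ideal G \<F>" and "left_invariant G \<F>" and "h_invariant H h \<F>"
    and "nonzero_limit \<alpha>"
    and "\<And>n. A n \<in> tau_below G \<F> \<alpha>" and "\<And>n. A n \<subseteq> H"
  shows "(\<Union>n. (h ^^ n) ` A n) \<in> tau_pow G \<F> \<alpha>"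
proof -
  have H: "subgroup H G" using assms(2) unfolding torsion_free_subgroup_def by blast
  have hom: "h \<in> hom (G\<lparr>carrier := H\<rparr>) (G\<lparr>carrier := H\<rparr>)" and inj: "inj_on h H"
    using assms(4,5) hom_subgroup_codomain unfolding iso_def bij_betw_def by auto
  have "(\<Union>n. (h ^^ n) ` A n) \<subseteq> H"
    using hom_in_carrier[OF funpow_hom[OF hom]] assms(12) by fastforce
  then have union_carrier: "(\<Union>n. (h ^^ n) ` A n) \<subseteq> carrier G" using subgroup.subset[OF H] by blast
  obtain c where c: "c < \<alpha>" "A 0 \<in> tau_pow G \<F> c" using assms(11)[of 0] unfolding tau_below_iff by blast
  show ?thesis
  proof (cases "\<exists>x\<in>carrier G. x \<noteq> \<one>\<^bsub>G\<^esub>")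
    case False
    then show ?thesis using tau_pow_trivial_group[OF _ c(1) union_carrier] by blast
  next
    case True
    then obtain x where "x \<in> carrier G" "x \<noteq> \<one>\<^bsub>G\<^esub>" by blast
    then have empty: "{} \<in> \<F>" using group.ideal_contains_empty[OF assms(1,7)] c(2) by blast
    interpret expanding_tau G \<F> H h
      by (intro expanding_tau.intro torsion_free_tau.intro endo_tau.intro subgroup_tau.intro
          tau_ideal.intro tau_ideal_axioms.intro subgroup_tau_axioms.intro torsion_free_tau_axioms.intro
          endo_tau_axioms.intro expanding_tau_axioms.intro assms(1,2,6-9) H hom inj empty)
    show ?thesis using union_of_iterates[OF assms(10-12)] .
  qed
qed

end
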